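(* Let $(X,\|\cdot\|)$ be a real Banach space, let $(\Omega,\Sigma,\mu)$ be a complete probability space, let $n$ be a positive integer and let $N$ be a monotonous norm on $\mathbb{R}^n$. Let $W$ be a weakly compact subset of $X$. Then $L_\infty(\mu,W)$ is $N$-simultaneously proximinal in $L_\infty(\mu,X)$; that is, for every $f_1,\ldots,f_n\in L_\infty(\mu,X)$ there exists $g_0\in L_\infty(\mu,W)$ such that $$N\big(\|f_1-g_0\|_\infty,\ldots,\|f_n-g_0\|_\infty\big)\le N\big(\|f_1-g\|_\infty,\ldots,\|f_n-g\|_\infty\big)\quad\text{for every } g\in L_\infty(\mu,W).$$
   Context: $L_\infty(\mu,X)$ denotes the Banach space of (equivalence classes of) $\mu$-measurable (strongly measurable, in the Bochner sense), essentially bounded functions $f:\Omega\to X$, with norm $\|f\|_\infty=\operatorname{ess\,sup}_{s\in\Omega}\|f(s)\|$. For a subset $W\subset X$, $L_\infty(\mu,W)=\{g\in L_\infty(\mu,X): g(s)\in W \text{ for a.e. } s\in\Omega\}$. A norm $N$ on $\mathbb{R}^n$ is monotonous if for all $t=(t_i),s=(s_i)\in\mathbb{R}^n$ with $|t_i|\le|s_i|$ for $i=1,\ldots,n$ one has $N(t)\le N(s)$. For a subset $Y$ of a normed space $Z$, an element $y_0\in Y$ is a best $N$-simultaneous approximation from $Y$ of $z_1,\ldots,z_n\in Z$ if $N(\|z_1-y_0\|,\ldots,\|z_n-y_0\|)\le N(\|z_1-y\|,\ldots,\|z_n-y\|)$ for all $y\in Y$; $Y$ is $N$-simultaneously proximinal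 in $Z$ if every $n$-tuple in $Z$ admits a best $N$-simultaneous approximation from $Y$. *)

theory Defs
  imports "HOL-Analysis.Analysis" "HOL-Probability.Probability"
begin

definition weak_topology :: "'x::real_normed_vector topology" where
  "weak_topology = topology_generated_by
     {{x. l x \<in> U} | l U. bounded_linear (l :: 'x \<Rightarrow> real) \<and> open U}"

definition weakly_compact :: "'x::real_normed_vector set \<Rightarrow> bool" where
  "weakly_compact W \<longleftrightarrow> compactin weak_topology W"

definition strongly_measurable :: "'a measure \<Rightarrow> ('a \<Rightarrow> 'x::real_normed_vector) \<Rightarrow> bool" where
  "strongly_measurable M f \<longleftrightarrow>
     (\<exists>s. (\<forall>k. simple_function M (s k)) \<and> (AE x in M. (\<lambda>k. s k x) \<longlonglongrightarrow> f x))"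

text \<open>Representatives of elements of L_infty(mu,X).\<close>
definition Linf :: "'a measure \<Rightarrow> ('a \<Rightarrow> 'x::real_normed_vector) set" where
  "Linf M = {f. strongly_measurable M f \<and> (\<exists>B. AE x in M. norm (f x) \<le> B)}"

definition Linf_on :: "'a measure \<Rightarrow> 'x::real_normed_vector set \<Rightarrow> ('a \<Rightarrow> 'x) set" where
  "Linf_on M W = {g \<in> Linf M. AE x in M. g x \<in> W}"

definition Linf_norm :: "'a measure \<Rightarrow> ('a \<Rightarrow> 'x::real_normed_vector) \<Rightarrow> real" where
  "Linf_norm M f = Inf {B. AE x in M. norm (f x) \<le> B}"

definition is_norm :: "(real^'n \<Rightarrow> real) \<Rightarrow> bool" where
  "is_norm N \<longleftrightarrow> (\<forall>x. N x \<ge> 0) \<and> (\<forall>x. N x = 0 \<longleftrightarrow> x = 0)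
     \<and> (\<forall>c x. N (c *\<^sub>R x) = \<bar>c\<bar> * N x) \<and> (\<forall>x y. N (x + y) \<le> N x + N y)"

definition monotonous :: "(real^'n \<Rightarrow> real) \<Rightarrow> bool" where
  "monotonous N \<longleftrightarrow> (\<forall>t s. (\<forall>i. \<bar>t $ i\<bar> \<le> \<bar>s $ i\<bar>) \<longrightarrow> N t \<le> N s)"

end

theory Submission
  imports Defs
begin

(*
  Take a minimizing sequence g_k in L_infty(mu, W). The vectors of distances
  (||f_i - g_k||_infty)_i stay in a sublevel set of the monotonous norm N, which is bounded,
  so along a subsequence they converge to some r, and N(r) is the infimum. For almost every s
  the points g_k(s) lie in the weakly compact set W and have a weak cluster point g0(s); since
  closed balls are weakly closed, ||f_i(s) - g0(s)|| <= r_i, hence g0 is a best approximation.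

  The point is to choose g0(s) measurably. Almost all values of the g_k lie in a separable
  closed subspace Y, normed by countably many functionals l_m (Hahn-Banach). The cluster point
  is chosen lexicographically: t_0 is the largest cluster value of l_0(g_k(s)), t_1 the largest
  cluster value of l_1(g_k(s)) along the k where l_0(g_k(s)) is close to t_0, and so on. By
  compactness some weak cluster point z has l_m(z) = t_m for all m; the t_m depend measurably
  on s, z lies in Y because closed subspaces are weakly closed, and then
  ||z - y|| = sup_m |l_m(z) - l_m(y)| is measurable in s, which gives strong measurability.
*)

section \<open>Hahn--Banach extension\<close>

definition sublinear :: "('x::real_vector \<Rightarrow> real) \<Rightarrow> bool" where
  "sublinear p \<longleftrightarrow> (\<forall>x y. p (x + y) \<le> p x + p y) \<and> (\<forall>c x. 0 \<le> c \<longrightarrow> p (c *\<^sub>R x) = c * p x)"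

lemma sublinear_add: "sublinear p \<Longrightarrow> p (x + y) \<le> p x + p y"
  unfolding sublinear_def by blast

lemma sublinear_scaleR: "sublinear p \<Longrightarrow> 0 \<le> c \<Longrightarrow> p (c *\<^sub>R x) = c * p x"
  unfolding sublinear_def by blast

lemma sublinear_zero: "sublinear p \<Longrightarrow> p 0 = 0"
  using sublinear_scaleR[of p 0 0] by simp

lemma sublinear_scaleR_ge:
  assumes p: "sublinear p"
  shows "t * p x \<le> p (t *\<^sub>R x)"
proof (cases "t \<ge> 0")
  case True
  then show ?thesis by (simp add: sublinear_scaleR[OF p])
next
  case False
  have "0 \<le> p (t *\<^sub>R x) + p ((- t) *\<^sub>R x)"
    using sublinear_add[OF p, of "t *\<^sub>R x" "(- t) *\<^sub>R x"] sublinear_zero[OF p]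
    by (simp add: scaleR_left_distrib[symmetric])
  moreover have "p ((- t) *\<^sub>R x) = - t * p x"
    using False by (intro sublinear_scaleR[OF p]) simp
  ultimately show ?thesis by simp
qed

(* Partial linear functionals below p, encoded by their graphs: subspaces of X \<times> real lying
   below p. Zorn's lemma then applies to set inclusion. *)
definition dominated_graph :: "('x::real_vector \<Rightarrow> real) \<Rightarrow> ('x \<times> real) set \<Rightarrow> bool" where
  "dominated_graph p G \<longleftrightarrow> subspace G \<and> (\<forall>(x, a) \<in> G. a \<le> p x)"

lemma dominated_graph_subspace: "dominated_graph p G \<Longrightarrow> subspace G"
  unfolding dominated_graph_def by blast

lemma dominated_graph_le: "dominated_graph p G \<Longrightarrow> (x, a) \<in> G \<Longrightarrow> a \<le> p x"
  unfolding dominated_graph_def by blast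

lemma dominated_graph_unique:
  assumes p: "sublinear p" and G: "dominated_graph p G" and "(x, a) \<in> G" "(x, b) \<in> G"
  shows "a = b"
proof -
  note sub = dominated_graph_subspace[OF G]
  have "(0, a - b) \<in> G" "(0, b - a) \<in> G"
    using subspace_diff[OF sub assms(3,4)] subspace_diff[OF sub assms(4,3)] by simp_all
  then have "a - b \<le> p 0" "b - a \<le> p 0"
    by (auto intro: dominated_graph_le[OF G])
  then show ?thesis using sublinear_zero[OF p] by simp
qed

lemma dominated_graph_separating_value:
  assumes p: "sublinear p" and G: "dominated_graph p G"
  obtains c where "\<And>x a. (x, a) \<in> G \<Longrightarrow> a - p (x - z) \<le> c"
    and "\<And>x a. (x, a) \<in> G \<Longrightarrow> c \<le> p (x + z) - a"
proof -
  note sub = dominated_graph_subspace[OF G]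
  have key: "a' - p (x' - z) \<le> p (x + z) - a" if "(x, a) \<in> G" "(x', a') \<in> G" for x a x' a'
  proof -
    have "(x + x', a + a') \<in> G" using subspace_add[OF sub that] by simp
    then have "a + a' \<le> p (x + x')" by (rule dominated_graph_le[OF G])
    also have "\<dots> = p ((x + z) + (x' - z))" by simp
    also have "\<dots> \<le> p (x + z) + p (x' - z)" by (rule sublinear_add[OF p])
    finally show ?thesis by simp
  qed
  define S where "S = {a - p (x - z) | x a. (x, a) \<in> G}"
  have G0: "(0, 0) \<in> G" using subspace_0[OF sub] by (simp add: zero_prod_def)
  have "S \<noteq> {}" using G0 unfolding S_def by blast
  moreover have "bdd_above S" unfolding S_def bdd_above_def using key[OF G0] by blast
  ultimately show ?thesis
    by (intro that[of "Sup S"] cSup_upper cSup_least) (auto simp: S_def intro: key)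
qed

lemma dominated_graph_extend_le:
  assumes p: "sublinear p" and G: "dominated_graph p G" and yb: "(y, b) \<in> G"
    and below: "\<And>x a. (x, a) \<in> G \<Longrightarrow> a - p (x - z) \<le> c"
    and above: "\<And>x a. (x, a) \<in> G \<Longrightarrow> c \<le> p (x + z) - a"
  shows "b + t * c \<le> p (y + t *\<^sub>R z)"
proof -
  note sub = dominated_graph_subspace[OF G]
  consider "t > 0" | "t = 0" | "t < 0" by linarith
  then show ?thesis
  proof cases
    case 1
    have "(inverse t *\<^sub>R y, inverse t * b) \<in> G"
      using subspace_scale[OF sub yb, of "inverse t"] by simp
    from above[OF this] have "b + t * c \<le> t * p (inverse t *\<^sub>R y + z)"
      using 1 by (simp add: field_simps)
    also have "\<dots> = p (t *\<^sub>R (inverse t *\<^sub>R y + z))"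
      using 1 by (intro sublinear_scaleR[OF p, symmetric]) simp
    also have "t *\<^sub>R (inverse t *\<^sub>R y + z) = y + t *\<^sub>R z"
      using 1 by (simp add: scaleR_add_right)
    finally show ?thesis .
  next
    case 2
    then show ?thesis using dominated_graph_le[OF G yb] by simp
  next
    case 3
    have "(inverse (- t) *\<^sub>R y, inverse (- t) * b) \<in> G"
      using subspace_scale[OF sub yb, of "inverse (- t)"] by simp
    from below[OF this] have "b + t * c \<le> (- t) * p (inverse (- t) *\<^sub>R y - z)"
      using 3 by (simp add: field_simps)
    also have "\<dots> = p ((- t) *\<^sub>R (inverse (- t) *\<^sub>R y - z))"
      using 3 by (intro sublinear_scaleR[OF p, symmetric]) simp
    also have "(- t) *\<^sub>R (inverse (- t) *\<^sub>R y - z) = y + t *\<^sub>R z"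
      using 3 by (simp add: scaleR_diff_right)
    finally show ?thesis .
  qed
qed

lemma dominated_graph_extend:
  assumes p: "sublinear p" and G: "dominated_graph p G"
  shows "\<exists>c. dominated_graph p (span (insert (z, c) G))"
proof -
  obtain c where below: "\<And>x a. (x, a) \<in> G \<Longrightarrow> a - p (x - z) \<le> c"
    and above: "\<And>x a. (x, a) \<in> G \<Longrightarrow> c \<le> p (x + z) - a"
    using dominated_graph_separating_value[OF p G] by metis
  have "a \<le> p x" if xa: "(x, a) \<in> span (insert (z, c) G)" for x a
  proof -
    have "span G = G" using dominated_graph_subspace[OF G] by simp
    then obtain t where "(x, a) - t *\<^sub>R (z, c) \<in> G"
      using xa unfolding span_insert by blast
    then have "(x - t *\<^sub>R z, a - t * c) \<in> G" by simp
    from dominated_graph_extend_le[OF p G this below above, of t] show ?thesis by simp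
  qed
  then show ?thesis unfolding dominated_graph_def by blast
qed

lemma subspace_Union_chain:
  assumes "C \<noteq> {}" "\<And>X. X \<in> C \<Longrightarrow> subspace X" "subset.chain UNIV C"
  shows "subspace (\<Union>C)"
proof (rule subspaceI)
  show "0 \<in> \<Union>C" using assms(1,2) subspace_0 by blast
next
  fix u v assume "u \<in> \<Union>C" "v \<in> \<Union>C"
  then obtain X Y where "X \<in> C" "Y \<in> C" "u \<in> X" "v \<in> Y" by blast
  moreover have "X \<subseteq> Y \<or> Y \<subseteq> X" using assms(3) calculation(1,2) unfolding subset.chain_def by blast
  ultimately show "u + v \<in> \<Union>C" using assms(2) subspace_add by (metis UnionI subsetD)
next
  fix c u assume "u \<in> \<Union>C"
  then show "c *\<^sub>R u \<in> \<Union>C" using assms(2) subspace_scale by blast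
qed

lemma exists_maximal_dominated_graph:
  assumes p: "sublinear p"
  obtains G where "dominated_graph p G" "(y, p y) \<in> G"
    "\<And>X. dominated_graph p X \<Longrightarrow> G \<subseteq> X \<Longrightarrow> X = G"
proof -
  define A where "A = {G. dominated_graph p G \<and> (y, p y) \<in> G}"
  have "span {(y, p y)} \<in> A"
  proof -
    have "b \<le> p x" if "(x, b) \<in> span {(y, p y)}" for x b
    proof -
      from that obtain t where "(x, b) = t *\<^sub>R (y, p y)" by (auto simp: span_singleton)
      then show ?thesis using sublinear_scaleR_ge[OF p, of t y] by simp
    qed
    then show ?thesis unfolding A_def dominated_graph_def by (auto intro: span_base)
  qed
  then have "\<exists>G\<in>A. \<forall>X\<in>A. G \<subseteq> X \<longrightarrow> X = G"
  proof (intro subset_Zorn_nonempty)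
    fix C assume C: "C \<noteq> {}" "subset.chain A C"
    then have "subspace (\<Union>C)"
      by (intro subspace_Union_chain) (auto simp: A_def dominated_graph_def subset.chain_def)
    then show "\<Union>C \<in> A"
      using C by (fastforce simp: A_def dominated_graph_def subset.chain_def)
  qed blast
  then show ?thesis using that unfolding A_def by blast
qed

lemma hahn_banach_sublinear:
  assumes p: "sublinear p"
  shows "\<exists>l. linear l \<and> (\<forall>x. l x \<le> p x) \<and> l y = p y"
proof -
  obtain G where G: "dominated_graph p G" "(y, p y) \<in> G"
    and G_max: "\<And>X. dominated_graph p X \<Longrightarrow> G \<subseteq> X \<Longrightarrow> X = G"
    using exists_maximal_dominated_graph[OF p] by blast
  have total: "\<exists>a. (x, a) \<in> G" for x
  proof (rule ccontr)
    assume none: "\<nexists>a. (x, a) \<in> G"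
    obtain c where dom: "dominated_graph p (span (insert (x, c) G))"
      using dominated_graph_extend[OF p G(1)] by blast
    have "G \<subseteq> span (insert (x, c) G)" by (meson span_superset subset_insertI subset_trans)
    then have "span (insert (x, c) G) = G" using dom by (intro G_max)
    moreover have "(x, c) \<in> span (insert (x, c) G)" by (simp add: span_base)
    ultimately show False using none by blast
  qed
  define l where "l x = (THE a. (x, a) \<in> G)" for x
  have l_eq: "l x = a" if "(x, a) \<in> G" for x a
    unfolding l_def using that dominated_graph_unique[OF p G(1)] by blast
  have l_graph: "(x, l x) \<in> G" for x using total l_eq by blast
  note sub = dominated_graph_subspace[OF G(1)]
  have "linear l"
  proof (rule linearI)
    show "l (x + x') = l x + l x'" for x x'
      using subspace_add[OF sub l_graph l_graph] by (intro l_eq) simp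
    show "l (c *\<^sub>R x) = c *\<^sub>R l x" for c x
      using subspace_scale[OF sub l_graph] by (intro l_eq) simp
  qed
  then show ?thesis using l_graph l_eq G dominated_graph_le by blast
qed

lemma hahn_banach_norm_dominated:
  fixes p :: "'x::real_normed_vector \<Rightarrow> real"
  assumes p: "sublinear p" and p_le: "\<And>x. p x \<le> norm x"
  shows "\<exists>l. bounded_linear l \<and> (\<forall>x. l x \<le> p x) \<and> (\<forall>x. \<bar>l x\<bar> \<le> norm x) \<and> l y = p y"
proof -
  obtain l where l: "linear l" "\<And>x. l x \<le> p x" "l y = p y"
    using hahn_banach_sublinear[OF p] by blast
  have "\<bar>l x\<bar> \<le> norm x" for x
    using l(2)[of x] l(2)[of "- x"] p_le[of x] p_le[of "- x"] linear_neg[OF l(1), of x] by simp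
  moreover from this have "bounded_linear l"
    using l(1) by (intro bounded_linear_intro[where K=1]) (auto simp: linear_add linear_scale)
  ultimately show ?thesis using l by blast
qed

lemma exists_norming_functional:
  fixes y :: "'x::real_normed_vector"
  shows "\<exists>l. bounded_linear l \<and> (\<forall>x. \<bar>l x\<bar> \<le> norm x) \<and> l y = norm y"
  using hahn_banach_norm_dominated[of norm y] by (auto simp: sublinear_def norm_triangle_ineq)

section \<open>Weakly closed sets\<close>

lemma topspace_weak_topology [simp]: "topspace (weak_topology :: 'x::real_normed_vector topology) = UNIV"
proof -
  have "UNIV \<in> {{x. l x \<in> U} | l U. bounded_linear (l :: 'x \<Rightarrow> real) \<and> open U}"
    by (rule CollectI, rule exI[of _ "\<lambda>_. 0"], rule exI[of _ UNIV]) (auto intro: bounded_linear_zero)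
  then show ?thesis unfolding weak_topology_def topology_generated_by_topspace by blast
qed

lemma continuous_map_weak_topology_functional:
  fixes l :: "'x::real_normed_vector \<Rightarrow> real"
  assumes "bounded_linear l"
  shows "continuous_map weak_topology euclideanreal l"
  unfolding continuous_map_openin_preimage_eq
proof (intro conjI allI impI)
  fix U :: "real set" assume "openin euclideanreal U"
  then have "openin weak_topology {x. l x \<in> U}"
    unfolding weak_topology_def using assms by (intro topology_generated_by_Basis) auto
  then show "openin weak_topology (topspace weak_topology \<inter> l -` U)" by (simp add: vimage_def)
qed simp

lemma closedin_weak_topologyI:
  fixes S :: "'x::real_normed_vector set"
  assumes sep: "\<And>z. z \<notin> S \<Longrightarrow> \<exists>(l :: 'x \<Rightarrow> real) c. bounded_linear l \<and> c < l z \<and> (\<forall>x\<in>S. l x \<le> c)"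
  shows "closedin weak_topology S"
proof -
  have "openin weak_topology (topspace weak_topology - S)"
  proof (subst openin_subopen, intro ballI)
    fix z assume "z \<in> topspace weak_topology - S"
    then obtain l :: "'x \<Rightarrow> real" and c where l: "bounded_linear l" "c < l z" "\<forall>x\<in>S. l x \<le> c"
      using sep[of z] by auto
    let ?T = "{x \<in> topspace weak_topology. l x \<in> {c<..}}"
    have "openin weak_topology ?T"
      by (rule openin_continuous_map_preimage[OF continuous_map_weak_topology_functional[OF l(1)]]) simp
    moreover have "?T \<subseteq> topspace weak_topology - S" using l(3) by fastforce
    moreover have "z \<in> ?T" using l(2) by simp
    ultimately show "\<exists>T. openin weak_topology T \<and> z \<in> T \<and> T \<subseteq> topspace weak_topology - S"
      by blast
  qed
  then show ?thesis unfolding closedin_def by simp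
qed

lemma closedin_weak_topology_cball:
  fixes x0 :: "'x::real_normed_vector"
  shows "closedin weak_topology (cball x0 r)"
proof (rule closedin_weak_topologyI)
  fix z assume "z \<notin> cball x0 r"
  then have r: "r < norm (z - x0)" by (simp add: dist_norm norm_minus_commute)
  obtain l where l: "bounded_linear l" "\<And>x. \<bar>l x\<bar> \<le> norm x" "l (z - x0) = norm (z - x0)"
    using exists_norming_functional by blast
  interpret bounded_linear l by fact
  have "l x \<le> l x0 + r" if "x \<in> cball x0 r" for x
    using that l(2)[of "x - x0"] by (simp add: diff dist_norm norm_minus_commute)
  moreover have "l x0 + r < l z" using r l(3) by (simp add: diff)
  ultimately show "\<exists>(l :: 'x \<Rightarrow> real) c. bounded_linear l \<and> c < l z \<and> (\<forall>x\<in>cball x0 r. l x \<le> c)"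
    using l(1) by blast
qed

lemma infdist_subspace_add:
  fixes Y :: "'x::real_normed_vector set"
  assumes Y: "subspace Y"
  shows "infdist (x + y) Y \<le> infdist x Y + infdist y Y"
proof -
  have Y_ne: "Y \<noteq> {}" using subspace_0[OF Y] by blast
  have *: "infdist (x + y) Y - dist y b \<le> infdist x Y" if b: "b \<in> Y" for b
  proof -
    have "infdist (x + y) Y - dist y b \<le> dist x a" if a: "a \<in> Y" for a
    proof -
      have "infdist (x + y) Y \<le> dist (x + y) (a + b)" using subspace_add[OF Y a b] by (rule infdist_le)
      also have "\<dots> \<le> dist x a + dist y b"
        using norm_triangle_ineq[of "x - a" "y - b"] by (simp add: dist_norm algebra_simps)
      finally show ?thesis by simp
    qed
    then show ?thesis using Y_ne by (auto simp: infdist_notempty intro!: cINF_greatest)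
  qed
  have "infdist (x + y) Y - infdist x Y \<le> dist y b" if "b \<in> Y" for b
    using *[OF that] by linarith
  then have "infdist (x + y) Y - infdist x Y \<le> infdist y Y"
    using Y_ne by (auto simp: infdist_notempty[of Y y] intro!: cINF_greatest)
  then show ?thesis by simp
qed

lemma infdist_subspace_scaleR_le:
  fixes Y :: "'x::real_normed_vector set"
  assumes Y: "subspace Y" and c: "0 < c"
  shows "infdist (c *\<^sub>R x) Y \<le> c * infdist x Y"
proof -
  have Y_ne: "Y \<noteq> {}" using subspace_0[OF Y] by blast
  have "infdist (c *\<^sub>R x) Y / c \<le> dist x a" if a: "a \<in> Y" for a
  proof -
    have "infdist (c *\<^sub>R x) Y \<le> dist (c *\<^sub>R x) (c *\<^sub>R a)" using subspace_scale[OF Y a] by (rule infdist_le)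
    also have "\<dots> = c * dist x a" using c by (simp add: dist_norm scaleR_diff_right[symmetric])
    finally show ?thesis using c by (simp add: divide_le_eq mult.commute)
  qed
  then have "infdist (c *\<^sub>R x) Y / c \<le> infdist x Y"
    using Y_ne by (auto simp: infdist_notempty[of Y x] intro!: cINF_greatest)
  then show ?thesis using c by (simp add: divide_le_eq mult.commute)
qed

lemma sublinear_infdist_subspace:
  fixes Y :: "'x::real_normed_vector set"
  assumes Y: "subspace Y"
  shows "sublinear (\<lambda>x. infdist x Y)"
  unfolding sublinear_def
proof (intro conjI allI impI)
  show "infdist (x + y) Y \<le> infdist x Y + infdist y Y" for x y by (rule infdist_subspace_add[OF Y])
  fix c :: real and x assume "0 \<le> c"
  then consider "c = 0" | "0 < c" by linarith
  then show "infdist (c *\<^sub>R x) Y = c * infdist x Y"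
  proof cases
    case 1
    then show ?thesis using subspace_0[OF Y] by simp
  next
    case 2
    have "infdist x Y = infdist (inverse c *\<^sub>R (c *\<^sub>R x)) Y" using 2 by simp
    also have "\<dots> \<le> inverse c * infdist (c *\<^sub>R x) Y" using 2 by (intro infdist_subspace_scaleR_le[OF Y]) simp
    finally have "c * infdist x Y \<le> infdist (c *\<^sub>R x) Y" using 2 by (simp add: field_simps)
    then show ?thesis using infdist_subspace_scaleR_le[OF Y 2, of x] by simp
  qed
qed

lemma closedin_weak_topology_closed_subspace:
  fixes Y :: "'x::real_normed_vector set"
  assumes "closed Y" and Y: "subspace Y"
  shows "closedin weak_topology Y"
proof (rule closedin_weak_topologyI)
  fix z assume z: "z \<notin> Y"
  obtain l where l: "bounded_linear l" "\<And>x. l x \<le> infdist x Y" "l z = infdist z Y"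
    using hahn_banach_norm_dominated[OF sublinear_infdist_subspace[OF Y], of z]
      infdist_le[OF subspace_0[OF Y]] by fastforce
  have "l x \<le> 0" if "x \<in> Y" for x using l(2)[of x] that by simp
  moreover have "0 < l z" using l(3) infdist_pos_not_in_closed[OF assms(1) _ z] subspace_0[OF Y] by auto
  ultimately show "\<exists>(l :: 'x \<Rightarrow> real) c. bounded_linear l \<and> c < l z \<and> (\<forall>x\<in>Y. l x \<le> c)" using l(1) by blast
qed

section \<open>Lexicographically maximal cluster values\<close>

definition near_prefix :: "(nat \<Rightarrow> nat \<Rightarrow> real) \<Rightarrow> (nat \<Rightarrow> real) \<Rightarrow> nat \<Rightarrow> real \<Rightarrow> nat \<Rightarrow> bool" where
  "near_prefix a t J e k \<longleftrightarrow> (\<forall>i<J. \<bar>a i k - t i\<bar> < e)"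

definition lex_above :: "(nat \<Rightarrow> nat \<Rightarrow> real) \<Rightarrow> (nat \<Rightarrow> real) \<Rightarrow> nat \<Rightarrow> real \<Rightarrow> bool" where
  "lex_above a t J q \<longleftrightarrow> (\<forall>e>0. \<exists>\<^sub>F k in sequentially. near_prefix a t J e k \<and> q < a J k)"

(* The body is lex_above unfolded, so that the termination proof sees the recursive calls
   under the guard i < J; lex_limsup_eq folds it back. *)
function lex_limsup :: "(nat \<Rightarrow> nat \<Rightarrow> real) \<Rightarrow> nat \<Rightarrow> real" where
  "lex_limsup a J =
     Sup {q. \<forall>e>0. \<exists>\<^sub>F k in sequentially. (\<forall>i<J. \<bar>a i k - lex_limsup a i\<bar> < e) \<and> q < a J k}"
  by auto
termination by (relation "Wellfounded.measure snd") auto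

declare lex_limsup.simps [simp del]

lemma lex_limsup_eq: "lex_limsup a J = Sup {q. lex_above a (lex_limsup a) J q}"
  unfolding lex_above_def near_prefix_def by (subst lex_limsup.simps) (rule refl)

lemma near_prefix_mono: "near_prefix a t J e k \<Longrightarrow> J' \<le> J \<Longrightarrow> e \<le> e' \<Longrightarrow> near_prefix a t J' e' k"
  unfolding near_prefix_def by (meson less_le_trans order_less_le_trans)

lemma near_prefix_cong: "(\<And>i. i < J \<Longrightarrow> t i = t' i) \<Longrightarrow> near_prefix a t J e k = near_prefix a t' J e k"
  unfolding near_prefix_def by auto

lemma lex_above_downward: "lex_above a t J q \<Longrightarrow> q' \<le> q \<Longrightarrow> lex_above a t J q'"
  unfolding lex_above_def by (auto elim!: frequently_elim1)

lemma lex_above_iff_nat: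
  "lex_above a t J q \<longleftrightarrow> (\<forall>n. \<exists>\<^sub>F k in sequentially. near_prefix a t J (1 / Suc n) k \<and> q < a J k)"
proof
  assume freq: "\<forall>n. \<exists>\<^sub>F k in sequentially. near_prefix a t J (1 / Suc n) k \<and> q < a J k"
  show "lex_above a t J q"
    unfolding lex_above_def
  proof (intro allI impI)
    fix e :: real assume "e > 0"
    then obtain n where "1 / Suc n < e" using reals_Archimedean by (auto simp: divide_inverse)
    then show "\<exists>\<^sub>F k in sequentially. near_prefix a t J e k \<and> q < a J k"
      using freq[rule_format, of n] by (auto elim!: frequently_elim1 near_prefix_mono)
  qed
qed (simp add: lex_above_def)

lemma lex_above_bounds:
  assumes B: "\<And>k. \<bar>a J k\<bar> \<le> B"
    and near: "\<And>e. e > 0 \<Longrightarrow> \<exists>\<^sub>F k in sequentially. near_prefix a t J e k"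
  shows "lex_above a t J (- B - 1)" and "bdd_above {q. lex_above a t J q}"
proof -
  show "lex_above a t J (- B - 1)"
    unfolding lex_above_def
  proof (intro allI impI)
    fix e :: real assume "e > 0"
    have "- B - 1 < a J k" for k using B[of k] by linarith
    then show "\<exists>\<^sub>F k in sequentially. near_prefix a t J e k \<and> - B - 1 < a J k"
      using near[OF \<open>e > 0\<close>] by (auto elim!: frequently_elim1)
  qed
  have "q \<le> B" if q: "lex_above a t J q" for q
  proof -
    obtain k where "q < a J k" using q[unfolded lex_above_def, rule_format, of 1] by (auto dest: frequently_ex)
    then show ?thesis using B[of k] by linarith
  qed
  then show "bdd_above {q. lex_above a t J q}" by (intro bdd_aboveI[where M = B]) blast
qed

lemma frequently_near_lex_limsup:
  assumes bnd: "\<And>m. \<exists>B. \<forall>k. \<bar>a m k\<bar> \<le> B" and "e > 0"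
  shows "\<exists>\<^sub>F k in sequentially. near_prefix a (lex_limsup a) J e k"
  using \<open>e > 0\<close>
proof (induction J arbitrary: e)
  case 0
  then show ?case by (simp add: near_prefix_def)
next
  case (Suc J)
  let ?t = "lex_limsup a" and ?Q = "{q. lex_above a (lex_limsup a) J q}"
  obtain B where "\<And>k. \<bar>a J k\<bar> \<le> B" using bnd by blast
  note bounds = lex_above_bounds[OF this Suc.IH]
  have "?t J - e/2 < Sup ?Q" using Suc.prems lex_limsup_eq[of a J] by simp
  then obtain q where q: "lex_above a ?t J q" "?t J - e/2 < q"
    using less_cSup_iff[of ?Q] bounds by blast
  have "\<not> lex_above a ?t J (?t J + e/2)"
    using cSup_upper[OF _ bounds(2), of "?t J + e/2"] Suc.prems lex_limsup_eq[of a J] by auto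
  then obtain e0 where e0: "e0 > 0"
    and "\<not> (\<exists>\<^sub>F k in sequentially. near_prefix a ?t J e0 k \<and> ?t J + e/2 < a J k)"
    unfolding lex_above_def by blast
  then have above: "\<forall>\<^sub>F k in sequentially. near_prefix a ?t J e0 k \<longrightarrow> a J k \<le> ?t J + e/2"
    unfolding not_frequently by (auto elim!: eventually_mono)
  have "\<exists>\<^sub>F k in sequentially. near_prefix a ?t J (min e e0) k \<and> q < a J k"
    using q(1) Suc.prems e0 unfolding lex_above_def by simp
  from frequently_eventually_frequently[OF this above]
  show ?case
  proof (rule frequently_elim1)
    fix k assume k: "(near_prefix a ?t J (min e e0) k \<and> q < a J k) \<and>
      (near_prefix a ?t J e0 k \<longrightarrow> a J k \<le> ?t J + e/2)"
    then have "near_prefix a ?t J e k" "\<bar>a J k - ?t J\<bar> < e"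
      using near_prefix_mono[of a ?t J "min e e0" k] q(2) Suc.prems by auto
    then show "near_prefix a ?t (Suc J) e k" unfolding near_prefix_def by (auto simp: less_Suc_eq)
  qed
qed

lemma less_lex_limsup_iff:
  assumes bnd: "\<And>m. \<exists>B. \<forall>k. \<bar>a m k\<bar> \<le> B"
  shows "c < lex_limsup a J \<longleftrightarrow> (\<exists>q\<in>\<rat>. c < q \<and> lex_above a (lex_limsup a) J q)"
proof -
  let ?Q = "{q. lex_above a (lex_limsup a) J q}"
  obtain B where "\<And>k. \<bar>a J k\<bar> \<le> B" using bnd by blast
  note bounds = lex_above_bounds[OF this frequently_near_lex_limsup[of a, OF bnd]]
  have "c < Sup ?Q \<longleftrightarrow> (\<exists>q\<in>?Q. c < q)" using less_cSup_iff[of ?Q] bounds by blast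
  also have "\<dots> \<longleftrightarrow> (\<exists>q\<in>\<rat>. c < q \<and> q \<in> ?Q)"
    using Rats_dense_in_real[of c] lex_above_downward by (blast dest: less_imp_le)
  finally show ?thesis using lex_limsup_eq[of a J] by simp
qed

lemma borel_measurable_lex_limsup:
  fixes a :: "'s \<Rightarrow> nat \<Rightarrow> nat \<Rightarrow> real"
  assumes [measurable]: "\<And>m k. (\<lambda>s. a s m k) \<in> borel_measurable M"
    and bnd: "\<And>s m. \<exists>B. \<forall>k. \<bar>a s m k\<bar> \<le> B"
  shows "(\<lambda>s. lex_limsup (a s) J) \<in> borel_measurable M"
proof (induction J rule: less_induct)
  case (less J)
  define T where "T i s = (if i < J then lex_limsup (a s) i else 0)" for i s
  have [measurable]: "T i \<in> borel_measurable M" for i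
    using less by (cases "i < J") (simp_all add: T_def[abs_def])
  have "c < lex_limsup (a s) J \<longleftrightarrow> (\<exists>r::rat. c < of_rat r \<and> (\<forall>n::nat. \<forall>K::nat. \<exists>k\<ge>K.
      (\<forall>i\<in>{..<J}. \<bar>a s i k - T i s\<bar> < 1 / Suc n) \<and> of_rat r < a s J k))" for c s
  proof -
    have "near_prefix (a s) (lex_limsup (a s)) J e k = near_prefix (a s) (\<lambda>i. T i s) J e k" for e k
      by (rule near_prefix_cong) (simp add: T_def)
    then show ?thesis
      unfolding less_lex_limsup_iff[OF bnd] lex_above_iff_nat frequently_sequentially Rats_def
      by (auto simp: near_prefix_def Ball_def)
  qed
  then have eq: "{s \<in> space M. c < lex_limsup (a s) J} = {s \<in> space M. \<exists>r::rat. c < of_rat r \<and>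
      (\<forall>n::nat. \<forall>K::nat. \<exists>k\<ge>K. (\<forall>i\<in>{..<J}. \<bar>a s i k - T i s\<bar> < 1 / Suc n) \<and> of_rat r < a s J k)}" for c
    by blast
  have "{s \<in> space M. c < lex_limsup (a s) J} \<in> sets M" for c
    unfolding eq by measurable
  then show ?case by (rule borel_measurableI_greater)
qed

section \<open>Weak cluster points\<close>

definition weak_cluster :: "(nat \<Rightarrow> 'x::real_normed_vector) \<Rightarrow> 'x \<Rightarrow> bool" where
  "weak_cluster x z \<longleftrightarrow> (\<forall>K. z \<in> weak_topology closure_of (x ` {K..}))"

lemma weak_closure_functional_bound:
  fixes l :: "'x::real_normed_vector \<Rightarrow> real"
  assumes l: "bounded_linear l" and S: "\<And>y. y \<in> S \<Longrightarrow> \<bar>l y - c\<bar> \<le> e"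
    and z: "z \<in> weak_topology closure_of S"
  shows "\<bar>l z - c\<bar> \<le> e"
proof -
  let ?T = "{y \<in> topspace weak_topology. l y \<in> cball c e}"
  have "closedin weak_topology ?T"
    by (intro closedin_continuous_map_preimage[where Y = euclideanreal]
        continuous_map_weak_topology_functional l) auto
  moreover have "S \<subseteq> ?T" using S by (auto simp: dist_real_def abs_minus_commute)
  ultimately have "weak_topology closure_of S \<subseteq> ?T" by (rule closure_of_minimal[rotated])
  then show ?thesis using z by (auto simp: dist_real_def abs_minus_commute)
qed

lemma weak_cluster_in_closedin:
  assumes C: "closedin weak_topology C" and ev: "\<forall>\<^sub>F k in sequentially. x k \<in> C"
    and z: "weak_cluster x z"
  shows "z \<in> C"
proof -
  obtain K where "x ` {K..} \<subseteq> C" using ev unfolding eventually_sequentially by auto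
  then have "weak_topology closure_of (x ` {K..}) \<subseteq> C" using C by (rule closure_of_minimal)
  then show ?thesis using z unfolding weak_cluster_def by blast
qed

lemma compactin_Inter_nested:
  fixes C :: "nat \<Rightarrow> 'a set"
  assumes W: "compactin X W" and C: "\<And>n. closedin X (C n)" "\<And>m n. m \<le> n \<Longrightarrow> C n \<subseteq> C m"
    and meet: "\<And>n. W \<inter> C n \<noteq> {}"
  shows "W \<inter> \<Inter>(range C) \<noteq> {}"
proof -
  have fip: "W \<inter> \<Inter>F \<noteq> {}" if F: "finite F" "F \<subseteq> range C" for F
  proof -
    obtain I where I: "finite I" "F = C ` I" using F finite_subset_image by metis
    define n where "n = Max (insert 0 I)"
    have "C n \<subseteq> C i" if "i \<in> I" for i
      using C(2) I(1) that by (simp add: n_def)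
    then have "W \<inter> C n \<subseteq> W \<inter> \<Inter>F" using I(2) by blast
    then show ?thesis using meet[of n] by blast
  qed
  from W have "\<forall>\<U>. (\<forall>D\<in>\<U>. closedin X D) \<and> (\<forall>F. finite F \<and> F \<subseteq> \<U> \<longrightarrow> W \<inter> \<Inter>F \<noteq> {})
      \<longrightarrow> W \<inter> \<Inter>\<U> \<noteq> {}"
    unfolding compactin_fip by (rule conjunct2)
  then have "(\<forall>D\<in>range C. closedin X D) \<and> (\<forall>F. finite F \<and> F \<subseteq> range C \<longrightarrow> W \<inter> \<Inter>F \<noteq> {})
      \<longrightarrow> W \<inter> \<Inter>(range C) \<noteq> {}"
    by (rule spec)
  moreover have "\<forall>D\<in>range C. closedin X D" using C(1) by blast
  ultimately show ?thesis using fip by blast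
qed

lemma weak_cluster_with_lex_limsup_values:
  fixes x :: "nat \<Rightarrow> 'x::real_normed_vector"
  assumes W: "compactin weak_topology W" and xW: "\<And>k. x k \<in> W"
    and l: "\<And>m. bounded_linear (l m)" and bnd: "\<And>m. \<exists>B. \<forall>k. \<bar>l m (x k)\<bar> \<le> B"
  shows "\<exists>z\<in>W. weak_cluster x z \<and> (\<forall>m. l m z = lex_limsup (\<lambda>m k. l m (x k)) m)"
proof -
  define a where "a = (\<lambda>m k. l m (x k))"
  define t where "t = lex_limsup a"
  define C where "C n = weak_topology closure_of (x ` {k. n \<le> k \<and> near_prefix a t n (1 / Suc n) k})" for n
  have "W \<inter> \<Inter>(range C) \<noteq> {}"
  proof (rule compactin_Inter_nested[OF W])
    show "closedin weak_topology (C n)" for n unfolding C_def by simp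
    show "C n \<subseteq> C m" if "m \<le> n" for m n
      unfolding C_def using that
      by (intro closure_of_mono image_mono) (auto elim: near_prefix_mono simp: frac_le)
    show "W \<inter> C n \<noteq> {}" for n
    proof -
      have "\<exists>\<^sub>F k in sequentially. near_prefix a t n (1 / Suc n) k"
        unfolding t_def by (rule frequently_near_lex_limsup) (auto simp: a_def bnd)
      then obtain k where "n \<le> k" "near_prefix a t n (1 / Suc n) k"
        unfolding frequently_sequentially by blast
      then have "x k \<in> C n"
        unfolding C_def by (intro closure_of_subset[THEN subsetD]) auto
      then show ?thesis using xW by blast
    qed
  qed
  then obtain z where z: "z \<in> W" "\<And>n. z \<in> C n" by blast
  have "weak_cluster x z"
    unfolding weak_cluster_def
  proof
    fix K
    have "C K \<subseteq> weak_topology closure_of (x ` {K..})"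
      unfolding C_def by (intro closure_of_mono) auto
    then show "z \<in> weak_topology closure_of (x ` {K..})" using z(2) by blast
  qed
  moreover have "l m z = t m" for m
  proof -
    have close: "\<bar>l m z - t m\<bar> \<le> 1 / Suc n" if "m < n" for n
    proof (rule weak_closure_functional_bound[OF l])
      show "z \<in> weak_topology closure_of (x ` {k. n \<le> k \<and> near_prefix a t n (1 / Suc n) k})"
        using z(2)[of n] by (simp add: C_def)
      show "\<bar>l m y - t m\<bar> \<le> 1 / Suc n" if "y \<in> x ` {k. n \<le> k \<and> near_prefix a t n (1 / Suc n) k}" for y
        using that \<open>m < n\<close> by (auto simp: near_prefix_def a_def less_imp_le)
    qed
    have "(\<lambda>n. 1 / real (Suc n)) \<longlonglongrightarrow> 0"
      using LIMSEQ_inverse_real_of_nat by (simp add: divide_inverse)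
    then have "\<bar>l m z - t m\<bar> \<le> 0"
      by (rule LIMSEQ_le_const) (use close in \<open>auto intro!: exI[of _ "Suc m"]\<close>)
    then show ?thesis by simp
  qed
  ultimately show ?thesis using z(1) unfolding t_def a_def by blast
qed

lemma weak_cluster_norm_le:
  assumes z: "weak_cluster x z" and \<rho>: "\<rho> \<longlonglongrightarrow> \<rho>0" and le: "\<And>k. norm (c - x k) \<le> \<rho> k"
  shows "norm (c - z) \<le> \<rho>0"
proof (rule field_le_epsilon)
  fix e :: real assume "0 < e"
  then have "\<forall>\<^sub>F k in sequentially. x k \<in> cball c (\<rho>0 + e)"
    using order_tendstoD(2)[OF \<rho>, of "\<rho>0 + e"]
    by (auto simp: dist_norm elim!: eventually_mono intro: order_trans[OF le] less_imp_le)
  from weak_cluster_in_closedin[OF closedin_weak_topology_cball this z]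
  show "norm (c - z) \<le> \<rho>0 + e" by (simp add: dist_norm)
qed

section \<open>Strong measurability through a countable norming family\<close>

fun nearest_index :: "(nat \<Rightarrow> 'x::real_normed_vector) \<Rightarrow> 'x \<Rightarrow> nat \<Rightarrow> nat" where
  "nearest_index d y 0 = 0"
| "nearest_index d y (Suc j) =
     (if norm (y - d (Suc j)) < norm (y - d (nearest_index d y j)) then Suc j else nearest_index d y j)"

lemma nearest_index_le: "nearest_index d y j \<le> j"
  by (induction j) auto

lemma norm_nearest_index_le: "i \<le> j \<Longrightarrow> norm (y - d (nearest_index d y j)) \<le> norm (y - d i)"
  by (induction j) (auto simp: le_Suc_eq)

lemma strongly_measurableI_dist:
  fixes g :: "'a \<Rightarrow> 'x::real_normed_vector" and d :: "nat \<Rightarrow> 'x"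
  assumes [measurable]: "\<And>j. (\<lambda>s. norm (g s - d j)) \<in> borel_measurable M"
    and dense: "\<And>s. s \<in> space M \<Longrightarrow> g s \<in> closure (range d)"
  shows "strongly_measurable M g"
proof -
  have [measurable]: "(\<lambda>s. nearest_index d (g s) j) \<in> M \<rightarrow>\<^sub>M count_space UNIV" for j
  proof (induction j)
    case (Suc j)
    note [measurable] = Suc
    have "(\<lambda>s. norm (g s - d (nearest_index d (g s) j))) \<in> borel_measurable M"
      by (rule measurable_compose_countable[where f = "\<lambda>i s. norm (g s - d i)"]) measurable
    then show ?case by simp measurable
  qed simp
  define h where "h j s = d (nearest_index d (g s) j)" for j s
  have "simple_function M (h j)" for j
    unfolding simple_function_def
  proof
    have "h j ` space M \<subseteq> d ` {..j}" unfolding h_def using nearest_index_le by blast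
    then show "finite (h j ` space M)" by (rule finite_subset) simp
    show "\<forall>x\<in>h j ` space M. h j -` {x} \<inter> space M \<in> sets M"
      unfolding h_def by measurable
  qed
  moreover have "(\<lambda>j. h j s) \<longlonglongrightarrow> g s" if s: "s \<in> space M" for s
    unfolding LIMSEQ_iff
  proof (intro allI impI)
    fix r :: real assume "r > 0"
    then obtain i where i: "dist (d i) (g s) < r" using dense[OF s] closure_approachable by blast
    have "norm (h j s - g s) < r" if "i \<le> j" for j
      using norm_nearest_index_le[OF that, of "g s" d] i
      by (simp add: h_def dist_norm norm_minus_commute)
    then show "\<exists>no. \<forall>j\<ge>no. norm (h j s - g s) < r" by blast
  qed
  ultimately show ?thesis unfolding strongly_measurable_def by (blast intro: AE_I2)
qed

lemma subspace_closure_Rats_closed: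
  fixes S :: "'x::real_normed_vector set"
  assumes "0 \<in> S" and add: "\<And>x y. x \<in> S \<Longrightarrow> y \<in> S \<Longrightarrow> x + y \<in> S"
    and scale: "\<And>q x. q \<in> \<rat> \<Longrightarrow> x \<in> S \<Longrightarrow> q *\<^sub>R x \<in> S"
  shows "subspace (closure S)"
proof (rule subspaceI)
  show "0 \<in> closure S" using assms(1) closure_subset by blast
next
  fix x y assume "x \<in> closure S" "y \<in> closure S"
  then obtain u v where "\<And>n. u n \<in> S" "u \<longlonglongrightarrow> x" "\<And>n. v n \<in> S" "v \<longlonglongrightarrow> y"
    unfolding closure_sequential by blast
  then show "x + y \<in> closure S"
    unfolding closure_sequential by (intro exI[of _ "\<lambda>n. u n + v n"]) (auto intro: add tendsto_add)
next
  fix c :: real and x assume "x \<in> closure S"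
  then obtain u where "\<And>n. u n \<in> S" "u \<longlonglongrightarrow> x" unfolding closure_sequential by blast
  moreover obtain q where "\<And>n. q n \<in> \<rat>" "q \<longlonglongrightarrow> c"
    using Rats_closure_real closure_sequential by blast
  ultimately show "c *\<^sub>R x \<in> closure S"
    unfolding closure_sequential by (intro exI[of _ "\<lambda>n. q n *\<^sub>R u n"]) (auto intro: scale tendsto_scaleR)
qed

lemma countable_in_separable_closed_subspace:
  fixes V :: "'x::real_normed_vector set"
  assumes "countable V"
  obtains d :: "nat \<Rightarrow> 'x" where "V \<subseteq> closure (range d)" "subspace (closure (range d))"
proof -
  define v where "v = from_nat_into (insert 0 V)"
  have v: "range v = insert 0 V" unfolding v_def using assms by simp
  define comb where "comb xs = sum_list (map (\<lambda>(q, n). of_rat q *\<^sub>R v n) xs)" for xs :: "(rat \<times> nat) list"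
  define d where "d j = comb (from_nat j)" for j
  have "comb xs = d (to_nat xs)" for xs by (simp add: d_def)
  then have range_d: "range d = range comb" unfolding d_def by blast
  have "V \<subseteq> range comb"
  proof
    fix y assume "y \<in> V"
    then obtain n where "y = v n" using v by blast
    then have "y = comb [(1, n)]" by (simp add: comb_def)
    then show "y \<in> range comb" by blast
  qed
  then have "V \<subseteq> closure (range d)" using closure_subset unfolding range_d by blast
  moreover have "subspace (closure (range d))"
    unfolding range_d
  proof (rule subspace_closure_Rats_closed)
    show "0 \<in> range comb" by (rule range_eqI[of _ _ "[]"]) (simp add: comb_def)
    show "x + y \<in> range comb" if xy: "x \<in> range comb" "y \<in> range comb" for x y
    proof -
      obtain xs ys where "x = comb xs" "y = comb ys" using xy by blast
      then have "x + y = comb (xs @ ys)" by (simp add: comb_def)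
      then show ?thesis by simp
    qed
    show "q *\<^sub>R x \<in> range comb" if qx: "q \<in> \<rat>" "x \<in> range comb" for q x
    proof -
      obtain r xs where "q = of_rat r" "x = comb xs" using qx by (auto simp: Rats_def)
      moreover have "of_rat r *\<^sub>R comb ys = comb (map (\<lambda>(p, n). (r * p, n)) ys)" for ys
        by (induction ys) (auto simp: comb_def of_rat_mult scaleR_add_right)
      ultimately show ?thesis by simp
    qed
  qed
  ultimately show ?thesis by (rule that)
qed

definition norming_functionals :: "(nat \<Rightarrow> 'x::real_normed_vector \<Rightarrow> real) \<Rightarrow> (nat \<Rightarrow> 'x) \<Rightarrow> bool" where
  "norming_functionals l d \<longleftrightarrow>
     (\<forall>i. bounded_linear (l i) \<and> (\<forall>x. \<bar>l i x\<bar> \<le> norm x) \<and> l i (d i) = norm (d i))"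

lemma norming_functionalsD:
  assumes "norming_functionals l d"
  shows "bounded_linear (l i)" "\<bar>l i x\<bar> \<le> norm x" "l i (d i) = norm (d i)"
  using assms unfolding norming_functionals_def by blast+

lemma exists_norming_functionals: "\<exists>l. norming_functionals l d"
proof -
  have "\<forall>i. \<exists>l. bounded_linear l \<and> (\<forall>x. \<bar>l x\<bar> \<le> norm x) \<and> l (d i) = norm (d i)"
    using exists_norming_functional by blast
  then show ?thesis unfolding norming_functionals_def by (rule choice)
qed

lemma less_norm_iff_norming:
  assumes l: "norming_functionals l d" and z: "z \<in> closure (range d)"
  shows "c < norm z \<longleftrightarrow> (\<exists>i. c < \<bar>l i z\<bar>)"
proof
  assume "c < norm z"
  then have "(norm z - c) / 2 > 0" by simp
  then obtain i where i: "dist (d i) z < (norm z - c) / 2"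
    using z unfolding closure_approachable by blast
  interpret bounded_linear "l i" by (rule norming_functionalsD(1)[OF l])
  have "norm (d i) - norm (d i - z) \<le> \<bar>l i z\<bar>"
    using norming_functionalsD(2)[OF l, of i "d i - z"] norming_functionalsD(3)[OF l, of i]
      diff[of "d i" z] by linarith
  moreover have "norm z \<le> norm (d i) + norm (d i - z)"
    using norm_triangle_ineq2[of z "d i"] by (simp add: norm_minus_commute)
  ultimately have "c < \<bar>l i z\<bar>" using i by (simp add: dist_norm)
  then show "\<exists>i. c < \<bar>l i z\<bar>" ..
next
  assume "\<exists>i. c < \<bar>l i z\<bar>"
  then show "c < norm z" using norming_functionalsD(2)[OF l] by (meson order_less_le_trans)
qed

lemma strongly_measurableI_norming:
  fixes h :: "'a \<Rightarrow> 'x::real_normed_vector" and d :: "nat \<Rightarrow> 'x"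
  assumes l: "norming_functionals l d" and Y: "subspace (closure (range d))"
    and h: "\<And>s. s \<in> space M \<Longrightarrow> h s \<in> closure (range d)"
    and [measurable]: "\<And>i. (\<lambda>s. l i (h s)) \<in> borel_measurable M"
  shows "strongly_measurable M h"
proof (rule strongly_measurableI_dist[OF _ h])
  fix j
  have "c < norm (h s - d j) \<longleftrightarrow> (\<exists>i. c < \<bar>l i (h s) - l i (d j)\<bar>)" if "s \<in> space M" for s c
  proof -
    have "d j \<in> closure (range d)" by (rule closure_subset[THEN subsetD]) simp
    with Y h[OF that] have "h s - d j \<in> closure (range d)" by (rule subspace_diff)
    moreover have "l i (h s - d j) = l i (h s) - l i (d j)" for i
      by (rule linear_diff[OF bounded_linear.linear[OF norming_functionalsD(1)[OF l]]])
    ultimately show ?thesis using less_norm_iff_norming[OF l] by simp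
  qed
  then have eq: "{s \<in> space M. c < norm (h s - d j)} =
      {s \<in> space M. \<exists>i. c < \<bar>l i (h s) - l i (d j)\<bar>}" for c
    by auto
  have "{s \<in> space M. c < norm (h s - d j)} \<in> sets M" for c
    unfolding eq by measurable
  then show "(\<lambda>s. norm (h s - d j)) \<in> borel_measurable M"
    by (rule borel_measurableI_greater)
qed

lemma borel_measurable_functional_limit_on:
  fixes u :: "nat \<Rightarrow> 'a \<Rightarrow> 'x::real_normed_vector" and l :: "'x \<Rightarrow> real"
  assumes u: "\<And>m. simple_function M (u m)" and G: "G \<in> sets M"
    and lim: "\<And>s. s \<in> G \<Longrightarrow> (\<lambda>m. u m s) \<longlonglongrightarrow> g s" and l: "bounded_linear l"
  shows "(\<lambda>s. if s \<in> G then l (g s) else 0) \<in> borel_measurable M"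
proof (rule borel_measurable_LIMSEQ_real)
  show "(\<lambda>m. if s \<in> G then l (u m s) else 0) \<longlonglongrightarrow> (if s \<in> G then l (g s) else 0)" for s
    using bounded_linear.tendsto[OF l lim] by simp
  fix m
  have "simple_function M (\<lambda>s. l (u m s))"
    using simple_function_compose[OF u[of m], of l] by (simp add: comp_def)
  then have [measurable]: "(\<lambda>s. l (u m s)) \<in> borel_measurable M"
    by (rule borel_measurable_simple_function)
  show "(\<lambda>s. if s \<in> G then l (u m s) else 0) \<in> borel_measurable M"
    using G by measurable
qed

lemma strongly_measurable_conull_separable:
  fixes g :: "nat \<Rightarrow> 'a \<Rightarrow> 'x::real_normed_vector"
  assumes sm: "\<And>k. strongly_measurable M (g k)" and P: "AE s in M. P s"
  obtains d :: "nat \<Rightarrow> 'x" and G where "subspace (closure (range d))"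
    "G \<in> sets M" "AE s in M. s \<in> G" "\<And>s. s \<in> G \<Longrightarrow> P s"
    "\<And>s k. s \<in> G \<Longrightarrow> g k s \<in> closure (range d)"
    "\<And>(l :: 'x \<Rightarrow> real) k. bounded_linear l \<Longrightarrow> (\<lambda>s. if s \<in> G then l (g k s) else 0) \<in> borel_measurable M"
proof -
  obtain u where u: "\<And>k m. simple_function M (u k m)" "\<And>k. AE s in M. (\<lambda>m. u k m s) \<longlonglongrightarrow> g k s"
    using sm unfolding strongly_measurable_def by metis
  have "AE s in M. P s \<and> (\<forall>k. (\<lambda>m. u k m s) \<longlonglongrightarrow> g k s)"
    using P u(2) by (simp add: AE_all_countable)
  then obtain N where N: "{s \<in> space M. \<not> (P s \<and> (\<forall>k. (\<lambda>m. u k m s) \<longlonglongrightarrow> g k s))} \<subseteq> N"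
    "emeasure M N = 0" "N \<in> sets M"
    by (rule AE_E)
  define G where "G = space M - N"
  define V where "V = (\<Union>k m. u k m ` space M)"
  have G_good: "P s" "(\<lambda>m. u k m s) \<longlonglongrightarrow> g k s" if "s \<in> G" for s k
    using that N(1) by (auto simp: G_def)
  have "countable (u k m ` space M)" for k m
    using simple_functionD(1)[OF u(1)] by (rule countable_finite)
  then have "countable V" unfolding V_def by simp
  then obtain d :: "nat \<Rightarrow> 'x" where "V \<subseteq> closure (range d)" and Y: "subspace (closure (range d))"
    by (rule countable_in_separable_closed_subspace)
  then have closure_V: "closure V \<subseteq> closure (range d)" using closure_mono closure_closure by blast
  have G: "G \<in> sets M" using N(3) by (auto simp: G_def)
  have AE_G: "AE s in M. s \<in> G"
    using AE_not_in[OF null_setsI[OF N(2,3)]] AE_space by eventually_elim (simp add: G_def)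
  have g_d: "g k s \<in> closure (range d)" if "s \<in> G" for s k
  proof -
    have "g k s \<in> closure V"
      unfolding closure_sequential using G_good(2)[OF that] that
      by (intro exI[of _ "\<lambda>m. u k m s"]) (auto simp: V_def G_def)
    then show ?thesis using closure_V by blast
  qed
  have "(\<lambda>s. if s \<in> G then l (g k s) else 0) \<in> borel_measurable M"
    if "bounded_linear l" for l :: "'x \<Rightarrow> real" and k
    using u(1) G G_good(2) that by (rule borel_measurable_functional_limit_on)
  with Y G AE_G G_good(1) g_d show ?thesis by (rule that)
qed

section \<open>Measurable selection of weak cluster points\<close>

lemma measurable_weak_cluster_selection:
  fixes g :: "nat \<Rightarrow> 'a \<Rightarrow> 'x::real_normed_vector"
  assumes W: "compactin weak_topology W" and G: "G \<in> sets M"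
    and l: "norming_functionals l d" and Y: "subspace (closure (range d))"
    and g_W: "\<And>s k. s \<in> G \<Longrightarrow> g k s \<in> W" and g_d: "\<And>s k. s \<in> G \<Longrightarrow> g k s \<in> closure (range d)"
    and g_B: "\<And>s k. s \<in> G \<Longrightarrow> norm (g k s) \<le> B"
    and meas: "\<And>m k. (\<lambda>s. if s \<in> G then l m (g k s) else 0) \<in> borel_measurable M"
  obtains g0 where "strongly_measurable M g0"
    "\<And>s. s \<in> G \<Longrightarrow> g0 s \<in> W" "\<And>s. s \<in> G \<Longrightarrow> weak_cluster (\<lambda>k. g k s) (g0 s)"
proof -
  define a where "a s m k = (if s \<in> G then l m (g k s) else 0)" for s m k
  have a_bnd: "\<bar>a s m k\<bar> \<le> \<bar>B\<bar>" for s m k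
  proof (cases "s \<in> G")
    case True
    then show ?thesis using norming_functionalsD(2)[OF l, of m "g k s"] g_B[OF True, of k] by (simp add: a_def)
  qed (simp add: a_def)
  define Q where "Q = (\<lambda>s z. z \<in> W \<and> weak_cluster (\<lambda>k. g k s) z \<and> (\<forall>m. l m z = lex_limsup (a s) m))"
  have "\<exists>z. Q s z" if "s \<in> G" for s
  proof -
    have "a s = (\<lambda>m k. l m (g k s))" using that by (simp add: a_def fun_eq_iff)
    moreover have "\<exists>z\<in>W. weak_cluster (\<lambda>k. g k s) z \<and> (\<forall>m. l m z = lex_limsup (\<lambda>m k. l m (g k s)) m)"
      using a_bnd[of s] g_W[OF that] unfolding \<open>a s = _\<close>
      by (intro weak_cluster_with_lex_limsup_values[OF W _ norming_functionalsD(1)[OF l]]) blast+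
    ultimately show ?thesis unfolding Q_def by auto
  qed
  then have Q: "Q s (SOME z. Q s z)" if "s \<in> G" for s using that by (blast intro: someI_ex)
  define g0 where "g0 s = (if s \<in> G then SOME z. Q s z else 0)" for s
  have g0: "g0 s \<in> W" "weak_cluster (\<lambda>k. g k s) (g0 s)" "l m (g0 s) = lex_limsup (a s) m"
    if "s \<in> G" for s m
    using Q[OF that] that by (simp_all add: g0_def Q_def)
  have g0_d: "g0 s \<in> closure (range d)" for s
  proof (cases "s \<in> G")
    case True
    show ?thesis
      by (rule weak_cluster_in_closedin[OF closedin_weak_topology_closed_subspace[OF _ Y] _ g0(2)[OF True]])
        (simp_all add: g_d[OF True])
  qed (simp add: g0_def subspace_0[OF Y])
  (* The choice of g0 s is not measurable by itself, but its values under the l i are. *)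
  have "(\<lambda>s. l i (g0 s)) = (\<lambda>s. if s \<in> G then lex_limsup (a s) i else 0)" for i
    using g0(3) linear_0[OF bounded_linear.linear[OF norming_functionalsD(1)[OF l]]]
    by (auto simp: g0_def fun_eq_iff)
  moreover have "(\<lambda>s. lex_limsup (a s) i) \<in> borel_measurable M" for i
  proof (rule borel_measurable_lex_limsup)
    show "(\<lambda>s. a s m k) \<in> borel_measurable M" for m k unfolding a_def by (rule meas)
    show "\<exists>B. \<forall>k. \<bar>a s m k\<bar> \<le> B" for s m using a_bnd by blast
  qed
  ultimately have "strongly_measurable M g0"
    using G by (intro strongly_measurableI_norming[OF l Y g0_d]) simp
  from this g0(1,2) show ?thesis by (rule that)
qed

lemma Linf_on_weak_cluster_selection:
  fixes g :: "nat \<Rightarrow> 'a \<Rightarrow> 'x::real_normed_vector"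
  assumes W: "compactin weak_topology W" and g: "\<And>k. g k \<in> Linf_on M W"
    and B: "AE s in M. \<forall>k. norm (g k s) \<le> B"
  shows "\<exists>g0 \<in> Linf_on M W. AE s in M. weak_cluster (\<lambda>k. g k s) (g0 s)"
proof -
  have sm: "strongly_measurable M (g k)" for k using g unfolding Linf_on_def Linf_def by blast
  have "AE s in M. \<forall>k. g k s \<in> W \<and> norm (g k s) \<le> B"
    using g B unfolding Linf_on_def by (auto simp: AE_all_countable AE_conj_iff)
  from strongly_measurable_conull_separable[where g = g, OF sm this]
  obtain d :: "nat \<Rightarrow> 'x" and G where Y: "subspace (closure (range d))"
    and G: "G \<in> sets M" "AE s in M. s \<in> G"
    and good: "\<And>s. s \<in> G \<Longrightarrow> \<forall>k. g k s \<in> W \<and> norm (g k s) \<le> B"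
    and g_d: "\<And>s k. s \<in> G \<Longrightarrow> g k s \<in> closure (range d)"
    and meas: "\<And>(l :: 'x \<Rightarrow> real) k. bounded_linear l \<Longrightarrow>
      (\<lambda>s. if s \<in> G then l (g k s) else 0) \<in> borel_measurable M"
    by blast
  obtain l where l: "norming_functionals l d" using exists_norming_functionals by blast
  obtain g0 where g0: "strongly_measurable M g0" "\<And>s. s \<in> G \<Longrightarrow> g0 s \<in> W"
    and cluster: "\<And>s. s \<in> G \<Longrightarrow> weak_cluster (\<lambda>k. g k s) (g0 s)"
    by (rule measurable_weak_cluster_selection[OF W G(1) l Y, of g B])
      (use good g_d meas[OF norming_functionalsD(1)[OF l]] in auto)
  have g0_B: "norm (g0 s) \<le> B" if "s \<in> G" for s
    using weak_cluster_in_closedin[OF closedin_weak_topology_cball[of 0 B] _ cluster[OF that]] good[OF that]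
    by simp
  have "AE s in M. g0 s \<in> W \<and> norm (g0 s) \<le> B \<and> weak_cluster (\<lambda>k. g k s) (g0 s)"
    using G(2) by eventually_elim (simp add: g0(2) g0_B cluster)
  with g0(1) show ?thesis
    unfolding Linf_on_def Linf_def by (auto elim!: eventually_mono intro!: exI[of _ B] bexI[of _ g0])
qed

section \<open>Monotonous norms and the essential supremum norm\<close>

lemma is_norm_scaleR: "is_norm N \<Longrightarrow> N (c *\<^sub>R x) = \<bar>c\<bar> * N x"
  unfolding is_norm_def by blast

lemma is_norm_triangle: "is_norm N \<Longrightarrow> N (x + y) \<le> N x + N y"
  unfolding is_norm_def by blast

lemma is_norm_nonneg: "is_norm N \<Longrightarrow> 0 \<le> N x"
  unfolding is_norm_def by blast

lemma monotonousD: "monotonous N \<Longrightarrow> (\<And>i. \<bar>t $ i\<bar> \<le> \<bar>s $ i\<bar>) \<Longrightarrow> N t \<le> N s"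
  unfolding monotonous_def by blast

lemma monotonous_norm_le_norm:
  assumes "is_norm N" "monotonous N"
  shows "N x \<le> norm x * N (\<chi> i. 1)"
proof -
  have "N x \<le> N (norm x *\<^sub>R (\<chi> i. 1))"
    by (rule monotonousD[OF assms(2)]) (simp add: component_le_norm_cart)
  then show ?thesis by (simp add: is_norm_scaleR[OF assms(1)])
qed

lemma monotonous_norm_ge_component:
  assumes "is_norm N" "monotonous N"
  shows "\<bar>x $ i\<bar> * N (axis i 1) \<le> N x"
proof -
  have "N (\<bar>x $ i\<bar> *\<^sub>R axis i 1) \<le> N x" by (rule monotonousD[OF assms(2)]) (simp add: axis_def)
  then show ?thesis by (simp add: is_norm_scaleR[OF assms(1)])
qed

lemma is_norm_axis_pos: "is_norm N \<Longrightarrow> 0 < N (axis i 1)"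
  unfolding is_norm_def by (metis axis_eq_0_iff order_le_less zero_neq_one)

lemma tendsto_monotonous_norm:
  assumes N: "is_norm N" "monotonous N" and f: "(f \<longlongrightarrow> r) F"
  shows "((\<lambda>k. N (f k)) \<longlongrightarrow> N r) F"
proof -
  have bound: "norm (N (f k) - N r) \<le> norm (f k - r) * N (\<chi> i. 1)" for k
  proof -
    have "N (f k) \<le> N r + N (f k - r)" "N r \<le> N (f k) + N (r - f k)"
      using is_norm_triangle[OF N(1), of r "f k - r"] is_norm_triangle[OF N(1), of "f k" "r - f k"] by simp_all
    moreover have "N (r - f k) = N (f k - r)"
      using is_norm_scaleR[OF N(1), of "-1" "f k - r"] by simp
    ultimately show ?thesis using monotonous_norm_le_norm[OF N, of "f k - r"] by simp
  qed
  have "((\<lambda>k. norm (f k - r) * N (\<chi> i. 1)) \<longlongrightarrow> 0) F"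
    using tendsto_mult_left_zero[OF tendsto_norm_zero[OF LIM_zero[OF f]]] by simp
  with always_eventually[OF allI[OF bound]] have "((\<lambda>k. N (f k) - N r) \<longlongrightarrow> 0) F"
    by (rule Lim_null_comparison)
  then show ?thesis by (rule LIM_zero_cancel)
qed

lemma bounded_monotonous_norm_sublevel:
  assumes "is_norm N" "monotonous N"
  shows "bounded {x. N x \<le> c}"
proof -
  have "norm x \<le> (\<Sum>i\<in>UNIV. c / N (axis i 1))" if "N x \<le> c" for x
  proof -
    have "\<bar>x $ i\<bar> \<le> c / N (axis i 1)" for i
      using monotonous_norm_ge_component[OF assms, of x i] that is_norm_axis_pos[OF assms(1), of i]
      by (simp add: pos_le_divide_eq)
    then have "(\<Sum>i\<in>UNIV. \<bar>x $ i\<bar>) \<le> (\<Sum>i\<in>UNIV. c / N (axis i 1))" by (rule sum_mono)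
    with norm_le_l1_cart[of x] show ?thesis by linarith
  qed
  then show ?thesis unfolding bounded_iff by blast
qed

lemma monotonous_norm_minimizing_sequence:
  fixes N :: "real^'n \<Rightarrow> real" and v :: "'g \<Rightarrow> real^'n"
  assumes N: "is_norm N" "monotonous N" and "A \<noteq> {}"
  obtains G r where "\<And>k. G k \<in> A" "(\<lambda>k. v (G k)) \<longlonglongrightarrow> r" "\<And>g. g \<in> A \<Longrightarrow> N r \<le> N (v g)"
proof -
  define m where "m = Inf ((\<lambda>g. N (v g)) ` A)"
  have m_le: "m \<le> N (v g)" if "g \<in> A" for g
    unfolding m_def using that is_norm_nonneg[OF N(1)] by (intro cInf_lower bdd_belowI) auto
  have "\<exists>g\<in>A. N (v g) < m + 1 / Suc k" for k
  proof -
    have "Inf ((\<lambda>g. N (v g)) ` A) < m + 1 / Suc k" by (simp add: m_def)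
    with \<open>A \<noteq> {}\<close> obtain y where "y \<in> (\<lambda>g. N (v g)) ` A" "y < m + 1 / Suc k"
      by (blast dest: cInf_lessD[rotated])
    then show ?thesis by blast
  qed
  then obtain G0 where G0: "\<And>k. G0 k \<in> A" "\<And>k. N (v (G0 k)) < m + 1 / Suc k" by metis
  have "N (v (G0 k)) \<le> m + 1" for k
  proof -
    have "1 / real (Suc k) \<le> 1" by simp
    then show ?thesis using G0(2)[of k] by linarith
  qed
  then have "bounded (range (\<lambda>k. v (G0 k)))"
    using bounded_monotonous_norm_sublevel[OF N, of "m + 1"] by (blast intro: bounded_subset)
  then obtain r \<phi> where \<phi>: "strict_mono \<phi>" and lim: "(\<lambda>k. v (G0 (\<phi> k))) \<longlonglongrightarrow> r"
    using bounded_imp_convergent_subsequence[of "\<lambda>k. v (G0 k)"] unfolding o_def by blast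
  have "N r \<le> m"
  proof (rule LIMSEQ_le[OF tendsto_monotonous_norm[OF N lim]])
    show "(\<lambda>k. m + 1 / Suc k) \<longlonglongrightarrow> m"
      using tendsto_add[OF tendsto_const LIMSEQ_Suc[OF lim_const_over_n[of 1]]] by simp
    have "N (v (G0 (\<phi> k))) \<le> m + 1 / Suc k" for k
    proof -
      have "1 / real (Suc (\<phi> k)) \<le> 1 / Suc k"
        using seq_suble[OF \<phi>, of k] by (intro divide_left_mono) auto
      then show ?thesis using G0(2)[of "\<phi> k"] by linarith
    qed
    then show "\<exists>K. \<forall>k\<ge>K. N (v (G0 (\<phi> k))) \<le> m + 1 / Suc k" by blast
  qed
  show ?thesis
  proof (rule that)
    show "G0 (\<phi> k) \<in> A" for k by (rule G0(1))
    show "(\<lambda>k. v (G0 (\<phi> k))) \<longlonglongrightarrow> r" by (rule lim)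
    show "N r \<le> N (v g)" if "g \<in> A" for g using \<open>N r \<le> m\<close> m_le[OF that] by linarith
  qed
qed
lemma AE_norm_bound_nonneg:
  assumes "prob_space M" "AE s in M. norm (h s) \<le> c"
  shows "0 \<le> c"
proof (rule ccontr)
  assume "\<not> 0 \<le> c"
  then have "AE s in M. False" using assms(2) by (auto elim: eventually_mono intro: order_trans[OF norm_ge_zero])
  then show False using prob_space.AE_False[OF assms(1)] by simp
qed

lemma Linf_norm_le:
  assumes "prob_space M" "AE s in M. norm (h s) \<le> c"
  shows "Linf_norm M h \<le> c"
  unfolding Linf_norm_def using assms AE_norm_bound_nonneg[OF assms(1)]
  by (intro cInf_lower bdd_belowI[of _ 0]) auto

lemma Linf_norm_nonneg:
  assumes "prob_space M" "AE s in M. norm (h s) \<le> c"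
  shows "0 \<le> Linf_norm M h"
  unfolding Linf_norm_def using assms AE_norm_bound_nonneg[OF assms(1)]
  by (intro cInf_greatest) auto

lemma AE_norm_le_Linf_norm:
  assumes P: "prob_space M" and c: "AE s in M. norm (h s) \<le> c"
  shows "AE s in M. norm (h s) \<le> Linf_norm M h"
proof -
  let ?S = "{B. AE s in M. norm (h s) \<le> B}"
  have "AE s in M. norm (h s) \<le> Linf_norm M h + 1 / Suc n" for n :: nat
  proof -
    have "Inf ?S < Linf_norm M h + 1 / Suc n" by (simp add: Linf_norm_def)
    then obtain b where "b \<in> ?S" "b < Linf_norm M h + 1 / Suc n"
      using cInf_lessD[of ?S] c by blast
    then show ?thesis by (auto elim: eventually_mono)
  qed
  then have "AE s in M. \<forall>n::nat. norm (h s) \<le> Linf_norm M h + 1 / Suc n"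
    by (simp add: AE_all_countable)
  then show ?thesis
  proof (rule eventually_mono)
    fix s assume le: "\<forall>n::nat. norm (h s) \<le> Linf_norm M h + 1 / Suc n"
    show "norm (h s) \<le> Linf_norm M h"
    proof (rule field_le_epsilon)
      fix e :: real assume "0 < e"
      then obtain n where "1 / Suc n < e" using reals_Archimedean by (auto simp: divide_inverse)
      then show "norm (h s) \<le> Linf_norm M h + e" using le by (meson add_left_mono less_imp_le order_trans)
    qed
  qed
qed

lemma Linf_const: "(\<lambda>_. w) \<in> Linf M"
  unfolding Linf_def strongly_measurable_def by (auto intro!: exI[of _ "\<lambda>_ _. w"])

lemma AE_norm_diff_le_Linf_norm:
  assumes P: "prob_space M" and "f \<in> Linf M" "g \<in> Linf M"
  shows "AE s in M. norm (f s - g s) \<le> Linf_norm M (\<lambda>s. f s - g s)"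
proof -
  obtain Bf Bg where "AE s in M. norm (f s) \<le> Bf" "AE s in M. norm (g s) \<le> Bg"
    using assms(2,3) unfolding Linf_def by blast
  then have "AE s in M. norm (f s - g s) \<le> Bf + Bg"
    by eventually_elim (rule order_trans[OF norm_triangle_ineq4], simp)
  then show ?thesis by (rule AE_norm_le_Linf_norm[OF P])
qed

lemma AE_uniformly_bounded:
  assumes c: "AE s in M. norm (c s) \<le> Bc" and x: "AE s in M. \<forall>k. norm (c s - x k s) \<le> \<rho> k"
    and \<rho>: "\<rho> \<longlonglongrightarrow> \<rho>0"
  shows "\<exists>B. AE s in M. \<forall>k. norm (x k s) \<le> B"
proof -
  obtain C where C: "\<And>k. norm (\<rho> k) \<le> C"
    using convergent_imp_Bseq[OF convergentI[OF \<rho>]] unfolding Bseq_def by blast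
  have "AE s in M. \<forall>k. norm (x k s) \<le> Bc + C"
    using c x
  proof eventually_elim
    case (elim s)
    show ?case
    proof
      fix k
      have "norm (x k s) \<le> norm (c s) + norm (c s - x k s)"
        using norm_triangle_ineq4[of "c s" "c s - x k s"] by simp
      also have "\<dots> \<le> Bc + C" using elim C[of k] by (smt (verit) real_norm_def abs_ge_self)
      finally show "norm (x k s) \<le> Bc + C" .
    qed
  qed
  then show ?thesis ..
qed

lemma Linf_norm_weak_cluster_le:
  assumes P: "prob_space M" and dist: "AE s in M. \<forall>k. norm (f s - x k s) \<le> \<rho> k"
    and \<rho>: "\<rho> \<longlonglongrightarrow> \<rho>0" and cluster: "AE s in M. weak_cluster (\<lambda>k. x k s) (g s)"
  shows "\<bar>Linf_norm M (\<lambda>s. f s - g s)\<bar> \<le> \<rho>0"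
proof -
  have "AE s in M. norm (f s - g s) \<le> \<rho>0"
    using cluster dist by eventually_elim (auto intro: weak_cluster_norm_le[OF _ \<rho>])
  then have "0 \<le> Linf_norm M (\<lambda>s. f s - g s)" "Linf_norm M (\<lambda>s. f s - g s) \<le> \<rho>0"
    by (rule Linf_norm_nonneg[OF P], rule Linf_norm_le[OF P])
  then show ?thesis by simp
qed

theorem mainTheorem1:
  fixes M :: "'a measure" and N :: "real^'n \<Rightarrow> real"
    and W :: "'x::banach set" and f :: "'n \<Rightarrow> 'a \<Rightarrow> 'x"
  assumes "prob_space M" and "complete_measure M"
    and "is_norm N" and "monotonous N"
    and "weakly_compact W" and "W \<noteq> {}"
    and "\<forall>i. f i \<in> Linf M"
  shows "\<exists>g0 \<in> Linf_on M W. \<forall>g \<in> Linf_on M W.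
           N (\<chi> i. Linf_norm M (\<lambda>s. f i s - g0 s)) \<le> N (\<chi> i. Linf_norm M (\<lambda>s. f i s - g s))"
proof -
  define v where "v g = (\<chi> i. Linf_norm M (\<lambda>s. f i s - g s))" for g
  obtain w where "w \<in> W" using assms(6) by blast
  then have "(\<lambda>_. w) \<in> Linf_on M W" using Linf_const by (auto simp: Linf_on_def)
  then obtain G r where G: "\<And>k. G k \<in> Linf_on M W" and lim: "(\<lambda>k. v (G k)) \<longlonglongrightarrow> r"
    and min: "\<And>g. g \<in> Linf_on M W \<Longrightarrow> N r \<le> N (v g)"
    using monotonous_norm_minimizing_sequence[OF assms(3,4), of "Linf_on M W" v] by blast
  have dist_G: "AE s in M. \<forall>k. norm (f i s - G k s) \<le> v (G k) $ i" for i
    using AE_norm_diff_le_Linf_norm[OF assms(1) spec[OF assms(7)]] G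
    by (simp add: AE_all_countable v_def Linf_on_def)
  fix i0 :: 'n
  obtain B where "AE s in M. \<forall>k. norm (G k s) \<le> B"
    using assms(7) AE_uniformly_bounded[OF _ dist_G[of i0] tendsto_vec_nth[OF lim]]
    unfolding Linf_def by blast
  with G obtain g0 where g0: "g0 \<in> Linf_on M W" and cluster: "AE s in M. weak_cluster (\<lambda>k. G k s) (g0 s)"
    using Linf_on_weak_cluster_selection assms(5) unfolding weakly_compact_def by blast
  have "\<bar>v g0 $ i\<bar> \<le> \<bar>r $ i\<bar>" for i
    using order_trans[OF Linf_norm_weak_cluster_le[OF assms(1) dist_G tendsto_vec_nth[OF lim] cluster] abs_ge_self]
    by (simp add: v_def)
  then show ?thesis using g0 min monotonousD[OF assms(4)] unfolding v_def by (meson order_trans)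
qed

end
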